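(* Let $\Sigma$ be an indexed set and let $\{p_j \mid j \in \Sigma\}$ be pair operations on $\mathcal{P}$. Then $\big(\bigvee_{j \in \Sigma} p_j\big)^{\mathrm{sd}} = \bigwedge_{j \in \Sigma} (p_j^{\mathrm{sd}})$ and $\big(\bigwedge_{j \in \Sigma} p_j\big)^{\mathrm{sd}}=\bigvee_{j \in \Sigma} (p_j^{\mathrm{sd}})$.
   Context: $(R,\mathfrak{m},k)$ is a complete Noetherian commutative local ring, $E=E_R(k)$, $(-)^\vee=\operatorname{Hom}_R(-,E)$, and $\mathcal{P}$ is a class of pairs $(L,M)$, $L\subseteq M$, of Matlis-dualizable $R$-modules closed under ambient isomorphisms. A pair operation assigns to each pair a submodule $p(L,M)\subseteq M$ compatibly with isomorphisms. Join and meet of pair operations: $(\bigvee_j p_j)(L,M) := \sum_j p_j(L,M)$ and $(\bigwedge_j p_j)(L,M) := \bigcap_j p_j(L,M)$. Identifying $(M/N)^\vee$ with $\{g\in M^\vee\mid g(N)=0\}$ and letting $\eta_B:B\to B^{\vee\vee}$ be the Matlis duality isomorphism, the smile dual is $p^{\mathrm{sd}}(A,B) := \eta_B^{-1}\big((B^\vee / p((B/A)^\vee,B^\vee))^\vee\big)$, defined on $\mathcal{P}^\vee=\{(A,B)\mid ((B/A)^\vee,B^\vee)\in\mathcal{P}\}$. *)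

theory Defs
  imports "HOL-Algebra.Module" "HOL-Algebra.Ideal_Product" "HOL-Algebra.Ring_Divisibility"
begin

definition lin_map :: "('r,'x) ring_scheme \<Rightarrow> ('r,'a) module \<Rightarrow> ('r,'b) module \<Rightarrow> ('a \<Rightarrow> 'b) \<Rightarrow> bool" where
  "lin_map R M N f \<longleftrightarrow> f \<in> carrier M \<rightarrow> carrier N
     \<and> (\<forall>x\<in>carrier M. \<forall>y\<in>carrier M. f (x \<oplus>\<^bsub>M\<^esub> y) = f x \<oplus>\<^bsub>N\<^esub> f y)
     \<and> (\<forall>r\<in>carrier R. \<forall>x\<in>carrier M. f (r \<odot>\<^bsub>M\<^esub> x) = r \<odot>\<^bsub>N\<^esub> f x)"

definition mod_iso :: "('r,'x) ring_scheme \<Rightarrow> ('r,'a) module \<Rightarrow> ('r,'b) module \<Rightarrow> ('a \<Rightarrow> 'b) \<Rightarrow> bool" where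
  "mod_iso R M N f \<longleftrightarrow> lin_map R M N f \<and> bij_betw f (carrier M) (carrier N)"

text \<open>The Matlis dual \<open>M^\<or> = Hom_R(M,E)\<close>, with pointwise operations; homomorphisms are
  represented extensionally (undefined outside the carrier of M).  The multiplicative
  fields of the underlying ring record are irrelevant for a module.\<close>
definition dual :: "('r,'x) ring_scheme \<Rightarrow> ('r,'e) module \<Rightarrow> ('r,'a) module \<Rightarrow> ('r, 'a \<Rightarrow> 'e) module" where
  "dual R E M = \<lparr> carrier = {f. lin_map R M E f \<and> f \<in> extensional (carrier M)},
      monoid.mult = (\<lambda>f g. undefined), monoid.one = undefined,
      ring.zero = (\<lambda>x\<in>carrier M. \<zero>\<^bsub>E\<^esub>),
      ring.add = (\<lambda>f g. \<lambda>x\<in>carrier M. f x \<oplus>\<^bsub>E\<^esub> g x),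
      module.smult = (\<lambda>r f. \<lambda>x\<in>carrier M. r \<odot>\<^bsub>E\<^esub> f x) \<rparr>"

text \<open>\<open>(M/N)^\<or>\<close> identified with \<open>{g \<in> M^\<or> | g(N) = 0}\<close>.\<close>
definition ann_dual :: "('r,'x) ring_scheme \<Rightarrow> ('r,'e) module \<Rightarrow> ('r,'a) module \<Rightarrow> 'a set \<Rightarrow> ('a \<Rightarrow> 'e) set" where
  "ann_dual R E M N = {g \<in> carrier (dual R E M). \<forall>x\<in>N. g x = \<zero>\<^bsub>E\<^esub>}"

definition eta :: "('r,'x) ring_scheme \<Rightarrow> ('r,'e) module \<Rightarrow> ('r,'a) module \<Rightarrow> 'a \<Rightarrow> (('a \<Rightarrow> 'e) \<Rightarrow> 'e)" where
  "eta R E M = (\<lambda>x\<in>carrier M. \<lambda>g\<in>carrier (dual R E M). g x)"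

definition matlis_dualizable :: "('r,'x) ring_scheme \<Rightarrow> ('r,'e) module \<Rightarrow> ('r,'a) module \<Rightarrow> bool" where
  "matlis_dualizable R E M \<longleftrightarrow> module R M \<and>
     mod_iso R M (dual R E (dual R E M)) (eta R E M)"

definition local_ring :: "('r,'x) ring_scheme \<Rightarrow> bool" where
  "local_ring R \<longleftrightarrow> (\<exists>!m. maximalideal m R)"

definition madic_complete :: "('r,'x) ring_scheme \<Rightarrow> bool" where
  "madic_complete R \<longleftrightarrow> (\<forall>m. maximalideal m R \<longrightarrow>
     (\<forall>x::nat \<Rightarrow> 'r. (\<forall>n. x n \<in> carrier R) \<and>
        (\<forall>k::nat. \<exists>N. \<forall>n\<ge>N. x (Suc n) \<ominus>\<^bsub>R\<^esub> x n \<in> m [^]\<^bsub>ideals_set R\<^esub> k) \<longrightarrow>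
        (\<exists>y\<in>carrier R. \<forall>k::nat. \<exists>N. \<forall>n\<ge>N. x n \<ominus>\<^bsub>R\<^esub> y \<in> m [^]\<^bsub>ideals_set R\<^esub> k)))"

definition complete_noetherian_local :: "('r,'x) ring_scheme \<Rightarrow> bool" where
  "complete_noetherian_local R \<longleftrightarrow> cring R \<and> noetherian_ring R \<and> local_ring R \<and> madic_complete R"

definition baer_injective :: "('r,'x) ring_scheme \<Rightarrow> ('r,'e) module \<Rightarrow> bool" where
  "baer_injective R E \<longleftrightarrow> (\<forall>I f. ideal I R \<and> f \<in> I \<rightarrow> carrier E
       \<and> (\<forall>a\<in>I. \<forall>b\<in>I. f (a \<oplus>\<^bsub>R\<^esub> b) = f a \<oplus>\<^bsub>E\<^esub> f b)
       \<and> (\<forall>r\<in>carrier R. \<forall>a\<in>I. f (r \<otimes>\<^bsub>R\<^esub> a) = r \<odot>\<^bsub>E\<^esub> f a)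
     \<longrightarrow> (\<exists>e\<in>carrier E. \<forall>a\<in>I. f a = a \<odot>\<^bsub>E\<^esub> e))"

text \<open>E is an injective hull of the residue field k: E is injective and is an essential
  extension of a cyclic submodule \<open>R x\<^sub>0 \<cong> R/m = k\<close>.\<close>
definition injective_hull_residue :: "('r,'x) ring_scheme \<Rightarrow> ('r,'e) module \<Rightarrow> bool" where
  "injective_hull_residue R E \<longleftrightarrow> module R E \<and> baer_injective R E \<and>
     (\<exists>x0\<in>carrier E. x0 \<noteq> \<zero>\<^bsub>E\<^esub>
        \<and> (\<forall>m. maximalideal m R \<longrightarrow> (\<forall>a\<in>m. a \<odot>\<^bsub>E\<^esub> x0 = \<zero>\<^bsub>E\<^esub>))
        \<and> (\<forall>x\<in>carrier E. x \<noteq> \<zero>\<^bsub>E\<^esub> \<longrightarrow>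
             (\<exists>r\<in>carrier R. r \<odot>\<^bsub>E\<^esub> x \<noteq> \<zero>\<^bsub>E\<^esub> \<and> (\<exists>s\<in>carrier R. r \<odot>\<^bsub>E\<^esub> x = s \<odot>\<^bsub>E\<^esub> x0))))"

type_synonym ('r,'a) pair = "'a set \<times> ('r,'a) module"

definition pair_class :: "('r,'x) ring_scheme \<Rightarrow> ('r,'e) module \<Rightarrow> ('r,'a) pair set \<Rightarrow> bool" where
  "pair_class R E P \<longleftrightarrow>
     (\<forall>(L,M)\<in>P. module R M \<and> submodule L R M \<and> matlis_dualizable R E M
                \<and> matlis_dualizable R E (M\<lparr>carrier := L\<rparr>))
   \<and> (\<forall>(L,M)\<in>P. \<forall>M' \<phi>. module R M' \<and> mod_iso R M M' \<phi> \<longrightarrow> (\<phi> ` L, M') \<in> P)"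

definition pair_operation :: "('r,'x) ring_scheme \<Rightarrow> ('r,'a) pair set \<Rightarrow> (('r,'a) pair \<Rightarrow> 'a set) \<Rightarrow> bool" where
  "pair_operation R P p \<longleftrightarrow> (\<forall>(L,M)\<in>P. submodule (p (L,M)) R M \<and>
       (\<forall>M' \<phi>. module R M' \<and> mod_iso R M M' \<phi> \<longrightarrow> p (\<phi> ` L, M') = \<phi> ` p (L,M)))"

text \<open>Join: the sum of the submodules \<open>p_j(L,M)\<close>, i.e. the submodule of M they generate.\<close>
definition join_op :: "('r,'x) ring_scheme \<Rightarrow> 'i set \<Rightarrow> ('i \<Rightarrow> ('r,'a) pair \<Rightarrow> 'a set) \<Rightarrow> ('r,'a) pair \<Rightarrow> 'a set" where
  "join_op R S ps = (\<lambda>(L,M). {x \<in> carrier M. \<forall>N. submodule N R M \<and> (\<Union>j\<in>S. ps j (L,M)) \<subseteq> N \<longrightarrow> x \<in> N})"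

text \<open>Meet: the intersection (the whole module for an empty index set).\<close>
definition meet_op :: "'i set \<Rightarrow> ('i \<Rightarrow> ('r,'a) pair \<Rightarrow> 'a set) \<Rightarrow> ('r,'a) pair \<Rightarrow> 'a set" where
  "meet_op S ps = (\<lambda>(L,M). carrier M \<inter> (\<Inter>j\<in>S. ps j (L,M)))"

definition dual_class :: "('r,'x) ring_scheme \<Rightarrow> ('r,'e) module \<Rightarrow> ('r,'a \<Rightarrow> 'e) pair set \<Rightarrow> ('r,'a) pair set" where
  "dual_class R E P = {(A,B). module R B \<and> submodule A R B \<and> (ann_dual R E B A, dual R E B) \<in> P}"

text \<open>\<open>p^sd(A,B) = \<eta>_B^{-1}((B^\<or>/p((B/A)^\<or>,B^\<or>))^\<or>)\<close>.\<close>
definition smile_dual :: "('r,'x) ring_scheme \<Rightarrow> ('r,'e) module \<Rightarrow> (('r,'a \<Rightarrow> 'e) pair \<Rightarrow> ('a \<Rightarrow> 'e) set) \<Rightarrow> ('r,'a) pair \<Rightarrow> 'a set" where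
  "smile_dual R E p = (\<lambda>(A,B). {b \<in> carrier B.
      eta R E B b \<in> ann_dual R E (dual R E B) (p (ann_dual R E B A, dual R E B))})"

end

theory Submission
  imports Defs
begin

text \<open>
  Only two properties of \<open>E\<close> are used.  Extending linear maps by Baer's criterion and Zorn's lemma, this makes
  \<open>E\<close> a cogenerator: if \<open>N\<close> is a submodule of \<open>M\<close> and \<open>m \<notin> N\<close>, some functional \<open>M \<rightarrow> E\<close>
  vanishes on \<open>N\<close> but not at \<open>m\<close>.

  For \<open>X \<subseteq> B\<^sup>\<or>\<close> let \<open>X\<^sup>\<bottom> \<subseteq> B\<close> be the common kernel of \<open>X\<close>; then
  \<open>p\<^sup>s\<^sup>d(A,B) = p((B/A)\<^sup>\<or>, B\<^sup>\<or>)\<^sup>\<bottom>\<close>.  The first identity holds because \<open>\<bottom>\<close> turns unions into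
  intersections and the functionals vanishing at a point form a submodule of \<open>B\<^sup>\<or>\<close>.  For the
  second, the cogenerator property gives \<open>N = (ann N)\<^sup>\<bottom>\<close> for submodules \<open>N \<subseteq> B\<close> and, since
  \<open>\<eta>\<^sub>B\<close> is onto whenever \<open>\<eta>\<^bsub>B\<^sup>\<or>\<^esub>\<close> is, also \<open>U = ann (U\<^sup>\<bottom>)\<close> for submodules \<open>U \<subseteq> B\<^sup>\<or>\<close>.
  So \<open>\<bottom>\<close> is an order-reversing bijection between the submodules of \<open>B\<^sup>\<or>\<close> and of \<open>B\<close>, and
  it takes the intersection of the \<open>U\<^sub>j\<close> to the submodule generated by the \<open>U\<^sub>j\<^sup>\<bottom>\<close>.
\<close>

lemma (in cring) ideal_le_maximalideal:
  assumes "ideal I R" and "\<one> \<notin> I"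
  shows "\<exists>m. maximalideal m R \<and> I \<subseteq> m"
proof -
  let ?A = "{J. ideal J R \<and> I \<subseteq> J \<and> \<one> \<notin> J}"
  have "\<exists>m\<in>?A. \<forall>J\<in>?A. m \<subseteq> J \<longrightarrow> J = m"
  proof (rule subset_Zorn_nonempty)
    show "?A \<noteq> {}" using assms by blast
    fix C assume "C \<noteq> {}" and C: "subset.chain ?A C"
    have "subset.chain {J. ideal J R} C"
      using C unfolding pred_on.chain_def by blast
    with \<open>C \<noteq> {}\<close> have "ideal (\<Union>C) R"
      using chain_Union_is_ideal by presburger
    moreover obtain J where "J \<in> C" using \<open>C \<noteq> {}\<close> by blast
    then have "I \<subseteq> \<Union>C" using C unfolding pred_on.chain_def by blast
    moreover have "\<one> \<notin> \<Union>C" using C unfolding pred_on.chain_def by blast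
    ultimately show "\<Union>C \<in> ?A" by simp
  qed
  then obtain m where m: "m \<in> ?A" and max: "\<forall>J\<in>?A. m \<subseteq> J \<longrightarrow> J = m"
    by (rule bexE)
  have "maximalideal m R"
  proof (rule maximalidealI)
    show "ideal m R" using m by simp
    show "carrier R \<noteq> m" using m by auto
    fix J assume J: "ideal J R" "m \<subseteq> J" "J \<subseteq> carrier R"
    show "J = m \<or> J = carrier R"
    proof (cases "\<one> \<in> J")
      case True
      then show ?thesis using ideal.one_imp_carrier[OF J(1)] by simp
    next
      case False
      then have "J \<in> ?A" using J(1,2) m by blast
      then show ?thesis using J(2) max by blast
    qed
  qed
  with m show ?thesis by blast
qed

lemma (in module) submodule_zero_closed:
  assumes "submodule N R M"
  shows "\<zero>\<^bsub>M\<^esub> \<in> N"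
  using subgroup.one_closed[OF submodule.axioms(1)[OF assms]] by simp

lemma (in module) colon_ideal:
  assumes N: "submodule N R M" and y: "y \<in> carrier M"
  shows "ideal {r \<in> carrier R. r \<odot>\<^bsub>M\<^esub> y \<in> N} R"
proof -
  let ?I = "{r \<in> carrier R. r \<odot>\<^bsub>M\<^esub> y \<in> N}"
  note NE = submoduleE[OF N]
  have l_closed: "x \<otimes> a \<in> ?I" if "a \<in> ?I" "x \<in> carrier R" for a x
    using that y NE(4) by (simp add: smult_assoc1)
  show ?thesis
  proof (rule idealI)
    show "ring R" ..
    show "subgroup ?I (add_monoid R)"
    proof (rule subgroup.intro)
      show "?I \<subseteq> carrier (add_monoid R)" by auto
      show "x \<otimes>\<^bsub>add_monoid R\<^esub> z \<in> ?I" if "x \<in> ?I" "z \<in> ?I" for x z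
        using that y NE(5) by (simp add: smult_l_distr)
      show "\<one>\<^bsub>add_monoid R\<^esub> \<in> ?I"
        using y submodule_zero_closed[OF N] by simp
      show "inv\<^bsub>add_monoid R\<^esub> x \<in> ?I" if "x \<in> ?I" for x
        using that y NE(3) by (simp add: a_inv_def[symmetric] smult_l_minus)
    qed
    show "x \<otimes> a \<in> ?I" if "a \<in> ?I" "x \<in> carrier R" for a x
      using that by (rule l_closed)
    show "a \<otimes> x \<in> ?I" if "a \<in> ?I" "x \<in> carrier R" for a x
      using l_closed[OF that] that by (simp add: m_comm)
  qed
qed

lemma lin_mapD:
  assumes "lin_map R M N f"
  shows "x \<in> carrier M \<Longrightarrow> f x \<in> carrier N"
    and "x \<in> carrier M \<Longrightarrow> y \<in> carrier M \<Longrightarrow> f (x \<oplus>\<^bsub>M\<^esub> y) = f x \<oplus>\<^bsub>N\<^esub> f y"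
    and "r \<in> carrier R \<Longrightarrow> x \<in> carrier M \<Longrightarrow> f (r \<odot>\<^bsub>M\<^esub> x) = r \<odot>\<^bsub>N\<^esub> f x"
  using assms unfolding lin_map_def by auto

lemma lin_map_zero:
  assumes "module R M" "module R N" "lin_map R M N f"
  shows "f \<zero>\<^bsub>M\<^esub> = \<zero>\<^bsub>N\<^esub>"
proof -
  interpret M: module R M by fact
  interpret N: module R N by fact
  have "f \<zero>\<^bsub>M\<^esub> = f (\<zero>\<^bsub>R\<^esub> \<odot>\<^bsub>M\<^esub> \<zero>\<^bsub>M\<^esub>)" by simp
  also have "\<dots> = \<zero>\<^bsub>R\<^esub> \<odot>\<^bsub>N\<^esub> f \<zero>\<^bsub>M\<^esub>" by (rule lin_mapD(3)[OF assms(3)]) simp_all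
  also have "\<dots> = \<zero>\<^bsub>N\<^esub>" using lin_mapD(1)[OF assms(3)] by simp
  finally show ?thesis .
qed

lemma lin_map_image_submodule:
  assumes "module R M" "module R N" "lin_map R M N f"
  shows "submodule (f ` carrier M) R N"
proof -
  interpret M: module R M by fact
  interpret N: module R N by fact
  note f = lin_mapD[OF assms(3)]
  show ?thesis
  proof (rule N.submoduleI)
    show "f ` carrier M \<subseteq> carrier N" using f(1) by blast
    show "\<zero>\<^bsub>N\<^esub> \<in> f ` carrier M"
      using M.zero_closed lin_map_zero[OF assms, symmetric] by (rule rev_image_eqI)
    show "\<ominus>\<^bsub>N\<^esub> a \<in> f ` carrier M" if a: "a \<in> f ` carrier M" for a
    proof -
      obtain x where x: "a = f x" "x \<in> carrier M" using a by (rule imageE)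
      have "(\<ominus>\<^bsub>R\<^esub> \<one>\<^bsub>R\<^esub>) \<odot>\<^bsub>M\<^esub> x \<in> carrier M" using x(2) by simp
      moreover have "\<ominus>\<^bsub>N\<^esub> a = f ((\<ominus>\<^bsub>R\<^esub> \<one>\<^bsub>R\<^esub>) \<odot>\<^bsub>M\<^esub> x)"
        using x f(1,3) by (simp add: N.smult_l_minus)
      ultimately show ?thesis by (rule rev_image_eqI)
    qed
    show "a \<oplus>\<^bsub>N\<^esub> b \<in> f ` carrier M" if ab: "a \<in> f ` carrier M" "b \<in> f ` carrier M" for a b
    proof -
      obtain x z where xz: "a = f x" "x \<in> carrier M" "b = f z" "z \<in> carrier M"
        using ab by (meson imageE)
      have "x \<oplus>\<^bsub>M\<^esub> z \<in> carrier M" using xz by simp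
      moreover have "a \<oplus>\<^bsub>N\<^esub> b = f (x \<oplus>\<^bsub>M\<^esub> z)" using xz f(2) by simp
      ultimately show ?thesis by (rule rev_image_eqI)
    qed
    show "r \<odot>\<^bsub>N\<^esub> a \<in> f ` carrier M" if r: "r \<in> carrier R" and a: "a \<in> f ` carrier M" for r a
    proof -
      obtain x where x: "a = f x" "x \<in> carrier M" using a by (rule imageE)
      have "r \<odot>\<^bsub>M\<^esub> x \<in> carrier M" using x(2) r by simp
      moreover have "r \<odot>\<^bsub>N\<^esub> a = f (r \<odot>\<^bsub>M\<^esub> x)" using x r f(3) by simp
      ultimately show ?thesis by (rule rev_image_eqI)
    qed
  qed
qed

lemma join_opI:
  assumes "x \<in> carrier M"
    and "\<And>N. submodule N R M \<Longrightarrow> (\<And>j. j \<in> S \<Longrightarrow> ps j (L, M) \<subseteq> N) \<Longrightarrow> x \<in> N"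
  shows "x \<in> join_op R S ps (L, M)"
  using assms unfolding join_op_def by blast

lemma join_op_least:
  assumes "submodule N R M" and "\<And>j. j \<in> S \<Longrightarrow> ps j (L, M) \<subseteq> N"
  shows "join_op R S ps (L, M) \<subseteq> N"
  using assms unfolding join_op_def by blast

lemma join_op_upper:
  assumes "j \<in> S" and "ps j (L, M) \<subseteq> carrier M"
  shows "ps j (L, M) \<subseteq> join_op R S ps (L, M)"
  using assms by (auto simp: join_op_def)

lemma join_op_carrier: "join_op R S ps (L, M) \<subseteq> carrier M"
  by (auto simp: join_op_def)

section \<open>Duals\<close>

lemma dual_carrier_iff:
  "f \<in> carrier (dual R E M) \<longleftrightarrow> lin_map R M E f \<and> f \<in> extensional (carrier M)"
  by (simp add: dual_def)

lemma dual_carrier_lin_map: "f \<in> carrier (dual R E M) \<Longrightarrow> lin_map R M E f"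
  by (simp add: dual_carrier_iff)

lemma dual_add: "f \<oplus>\<^bsub>dual R E M\<^esub> g = (\<lambda>x\<in>carrier M. f x \<oplus>\<^bsub>E\<^esub> g x)"
  by (simp add: dual_def)

lemma dual_zero: "\<zero>\<^bsub>dual R E M\<^esub> = (\<lambda>x\<in>carrier M. \<zero>\<^bsub>E\<^esub>)"
  by (simp add: dual_def)

lemma dual_smult: "r \<odot>\<^bsub>dual R E M\<^esub> f = (\<lambda>x\<in>carrier M. r \<odot>\<^bsub>E\<^esub> f x)"
  by (simp add: dual_def)

lemma dual_eqI:
  assumes "f \<in> carrier (dual R E M)" "g \<in> carrier (dual R E M)"
    and "\<And>x. x \<in> carrier M \<Longrightarrow> f x = g x"
  shows "f = g"
  by (rule extensionalityI[of f "carrier M" g]) (use assms in \<open>simp_all add: dual_carrier_iff\<close>)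

lemma eta_apply:
  "b \<in> carrier B \<Longrightarrow> g \<in> carrier (dual R E B) \<Longrightarrow> eta R E B b g = g b"
  by (simp add: eta_def)

lemma ann_dual_antimono: "N \<subseteq> N' \<Longrightarrow> ann_dual R E M N' \<subseteq> ann_dual R E M N"
  by (auto simp: ann_dual_def)

definition common_kernel :: "('r,'e) module \<Rightarrow> ('r,'a) module \<Rightarrow> ('a \<Rightarrow> 'e) set \<Rightarrow> 'a set" where
  "common_kernel E M F = {x \<in> carrier M. \<forall>f\<in>F. f x = \<zero>\<^bsub>E\<^esub>}"

lemma common_kernel_antimono: "F \<subseteq> G \<Longrightarrow> common_kernel E M G \<subseteq> common_kernel E M F"
  by (auto simp: common_kernel_def)

locale matlis_dual = R: cring R + E: module R E
  for R :: "('r,'x) ring_scheme" and E :: "('r,'e) module"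
begin

lemma dual_module:
  assumes "module R M"
  shows "module R (dual R E M)"
proof -
  interpret M: module R M by fact
  let ?D = "dual R E M"
  have val: "f x \<in> carrier E" if "f \<in> carrier ?D" "x \<in> carrier M" for f x
    using lin_mapD(1)[OF dual_carrier_lin_map[OF that(1)] that(2)] .
  have add_closed: "f \<oplus>\<^bsub>?D\<^esub> g \<in> carrier ?D" if "f \<in> carrier ?D" "g \<in> carrier ?D" for f g
    using that unfolding dual_carrier_iff dual_add lin_map_def
    by (auto simp: E.a_ac E.smult_r_distr Pi_iff)
  have smult_closed: "r \<odot>\<^bsub>?D\<^esub> f \<in> carrier ?D" if "r \<in> carrier R" "f \<in> carrier ?D" for r f
    using that unfolding dual_carrier_iff dual_smult lin_map_def
    by (auto simp: E.smult_r_distr E.smult_assoc1[symmetric] R.m_comm Pi_iff)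
  have zero_closed: "\<zero>\<^bsub>?D\<^esub> \<in> carrier ?D"
    unfolding dual_carrier_iff dual_zero lin_map_def by auto
  show ?thesis
  proof (rule moduleI[OF R.is_cring abelian_groupI])
    fix f g h assume f: "f \<in> carrier ?D" and g: "g \<in> carrier ?D" and h: "h \<in> carrier ?D"
    show "f \<oplus>\<^bsub>?D\<^esub> g \<oplus>\<^bsub>?D\<^esub> h = f \<oplus>\<^bsub>?D\<^esub> (g \<oplus>\<^bsub>?D\<^esub> h)"
      using val[OF f] val[OF g] val[OF h] by (auto simp: dual_add E.a_assoc)
    show "f \<oplus>\<^bsub>?D\<^esub> g = g \<oplus>\<^bsub>?D\<^esub> f"
      using val[OF f] val[OF g] by (auto simp: dual_add E.a_comm)
  next
    fix f assume f: "f \<in> carrier ?D"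
    show "\<zero>\<^bsub>?D\<^esub> \<oplus>\<^bsub>?D\<^esub> f = f"
      by (rule dual_eqI[OF add_closed[OF zero_closed f] f]) (simp add: dual_add dual_zero val[OF f])
    show "\<one>\<^bsub>R\<^esub> \<odot>\<^bsub>?D\<^esub> f = f"
      by (rule dual_eqI[OF smult_closed[OF _ f] f]) (simp_all add: dual_smult val[OF f])
    show "\<exists>g\<in>carrier ?D. g \<oplus>\<^bsub>?D\<^esub> f = \<zero>\<^bsub>?D\<^esub>"
    proof
      show neg: "(\<ominus>\<^bsub>R\<^esub> \<one>\<^bsub>R\<^esub>) \<odot>\<^bsub>?D\<^esub> f \<in> carrier ?D" using f by (simp add: smult_closed)
      show "(\<ominus>\<^bsub>R\<^esub> \<one>\<^bsub>R\<^esub>) \<odot>\<^bsub>?D\<^esub> f \<oplus>\<^bsub>?D\<^esub> f = \<zero>\<^bsub>?D\<^esub>"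
        by (rule dual_eqI[OF add_closed[OF neg f] zero_closed])
          (simp add: dual_add dual_smult dual_zero val[OF f] E.smult_l_minus E.l_neg)
    qed
  next
    fix a b f g assume a: "a \<in> carrier R" and b: "b \<in> carrier R"
      and f: "f \<in> carrier ?D" and g: "g \<in> carrier ?D"
    show "(a \<oplus>\<^bsub>R\<^esub> b) \<odot>\<^bsub>?D\<^esub> f = a \<odot>\<^bsub>?D\<^esub> f \<oplus>\<^bsub>?D\<^esub> b \<odot>\<^bsub>?D\<^esub> f"
      using a b val[OF f] by (auto simp: dual_add dual_smult E.smult_l_distr)
    show "a \<odot>\<^bsub>?D\<^esub> (f \<oplus>\<^bsub>?D\<^esub> g) = a \<odot>\<^bsub>?D\<^esub> f \<oplus>\<^bsub>?D\<^esub> a \<odot>\<^bsub>?D\<^esub> g"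
      using a val[OF f] val[OF g] by (auto simp: dual_add dual_smult E.smult_r_distr)
    show "(a \<otimes>\<^bsub>R\<^esub> b) \<odot>\<^bsub>?D\<^esub> f = a \<odot>\<^bsub>?D\<^esub> (b \<odot>\<^bsub>?D\<^esub> f)"
      using a b val[OF f] by (auto simp: dual_smult E.smult_assoc1)
  qed (use add_closed smult_closed zero_closed in auto)
qed

lemma eta_in_bidual:
  assumes B: "module R B" and b: "b \<in> carrier B"
  shows "eta R E B b \<in> carrier (dual R E (dual R E B))"
proof -
  interpret D: module R "dual R E B" using dual_module[OF B] .
  show ?thesis
    unfolding dual_carrier_iff lin_map_def
  proof (intro conjI ballI)
    show "eta R E B b \<in> carrier (dual R E B) \<rightarrow> carrier E"
      using b lin_mapD(1)[OF dual_carrier_lin_map] by (auto simp: eta_apply)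
    show "eta R E B b \<in> extensional (carrier (dual R E B))"
      using b by (simp add: eta_def)
  next
    fix f g assume "f \<in> carrier (dual R E B)" "g \<in> carrier (dual R E B)"
    then show "eta R E B b (f \<oplus>\<^bsub>dual R E B\<^esub> g) = eta R E B b f \<oplus>\<^bsub>E\<^esub> eta R E B b g"
      using b D.a_closed by (simp add: eta_apply, simp add: dual_add)
  next
    fix r f assume "r \<in> carrier R" "f \<in> carrier (dual R E B)"
    then show "eta R E B b (r \<odot>\<^bsub>dual R E B\<^esub> f) = r \<odot>\<^bsub>E\<^esub> eta R E B b f"
      using b D.smult_closed by (simp add: eta_apply, simp add: dual_smult)
  qed
qed

lemma eta_lin_map:
  assumes B: "module R B"
  shows "lin_map R B (dual R E (dual R E B)) (eta R E B)"
proof -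
  interpret B: module R B by fact
  interpret DD: module R "dual R E (dual R E B)" using dual_module[OF dual_module[OF B]] .
  note eta = eta_in_bidual[OF B]
  show ?thesis
    unfolding lin_map_def
  proof (intro conjI ballI)
    show "eta R E B \<in> carrier B \<rightarrow> carrier (dual R E (dual R E B))"
      using eta by blast
  next
    fix b c assume b: "b \<in> carrier B" and c: "c \<in> carrier B"
    show "eta R E B (b \<oplus>\<^bsub>B\<^esub> c) = eta R E B b \<oplus>\<^bsub>dual R E (dual R E B)\<^esub> eta R E B c"
      by (rule dual_eqI[OF eta DD.a_closed])
        (use b c eta lin_mapD(2)[OF dual_carrier_lin_map] in \<open>simp_all add: eta_apply dual_add\<close>)
  next
    fix r b assume r: "r \<in> carrier R" and b: "b \<in> carrier B"
    show "eta R E B (r \<odot>\<^bsub>B\<^esub> b) = r \<odot>\<^bsub>dual R E (dual R E B)\<^esub> eta R E B b"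
      by (rule dual_eqI[OF eta DD.smult_closed])
        (use r b eta lin_mapD(3)[OF dual_carrier_lin_map] in \<open>simp_all add: eta_apply dual_smult\<close>)
  qed
qed

lemma submodule_common_kernel:
  assumes M: "module R M" and F: "\<And>f. f \<in> F \<Longrightarrow> lin_map R M E f"
  shows "submodule (common_kernel E M F) R M"
proof -
  interpret M: module R M by fact
  have vanish: "f a = \<zero>\<^bsub>E\<^esub>" if "a \<in> common_kernel E M F" "f \<in> F" for a f
    using that unfolding common_kernel_def by blast
  have smult_closed: "r \<odot>\<^bsub>M\<^esub> a \<in> common_kernel E M F"
    if r: "r \<in> carrier R" and a: "a \<in> common_kernel E M F" for r a
  proof -
    have a_carrier: "a \<in> carrier M" using a by (simp add: common_kernel_def)
    have "f (r \<odot>\<^bsub>M\<^esub> a) = \<zero>\<^bsub>E\<^esub>" if "f \<in> F" for f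
      using lin_mapD(3)[OF F[OF that] r a_carrier] vanish[OF a that] r by simp
    with r a_carrier show ?thesis by (simp add: common_kernel_def)
  qed
  show ?thesis
  proof (rule M.submoduleI)
    show "common_kernel E M F \<subseteq> carrier M" by (auto simp: common_kernel_def)
    show "\<zero>\<^bsub>M\<^esub> \<in> common_kernel E M F"
      using lin_map_zero[OF M E.module_axioms F] by (simp add: common_kernel_def)
    show "\<ominus>\<^bsub>M\<^esub> a \<in> common_kernel E M F" if a: "a \<in> common_kernel E M F" for a
      using smult_closed[OF _ a, of "\<ominus>\<^bsub>R\<^esub> \<one>\<^bsub>R\<^esub>"] a
      by (simp add: common_kernel_def M.smult_l_minus)
    show "a \<oplus>\<^bsub>M\<^esub> b \<in> common_kernel E M F"
      if a: "a \<in> common_kernel E M F" and b: "b \<in> common_kernel E M F" for a b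
    proof -
      have carrier: "a \<in> carrier M" "b \<in> carrier M" using a b by (simp_all add: common_kernel_def)
      have "f (a \<oplus>\<^bsub>M\<^esub> b) = \<zero>\<^bsub>E\<^esub>" if "f \<in> F" for f
        using lin_mapD(2)[OF F[OF that] carrier] vanish[OF a that] vanish[OF b that] by simp
      with carrier show ?thesis by (simp add: common_kernel_def)
    qed
  qed (rule smult_closed)
qed

lemma smile_dual_eq:
  assumes B: "module R B" and X: "p (ann_dual R E B A, dual R E B) \<subseteq> carrier (dual R E B)"
  shows "smile_dual R E p (A, B) = common_kernel E B (p (ann_dual R E B A, dual R E B))"
  using X eta_in_bidual[OF B]
  by (auto simp: smile_dual_def common_kernel_def ann_dual_def eta_apply subset_iff)

lemma smile_dual_join_op:
  assumes B: "module R B"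
    and ps: "\<And>j. j \<in> S \<Longrightarrow> ps j (ann_dual R E B A, dual R E B) \<subseteq> carrier (dual R E B)"
  shows "smile_dual R E (join_op R S ps) (A, B) = meet_op S (\<lambda>j. smile_dual R E (ps j)) (A, B)"
proof -
  let ?D = "dual R E B"
  let ?X = "\<lambda>j. ps j (ann_dual R E B A, ?D)"
  let ?J = "join_op R S ps (ann_dual R E B A, ?D)"
  have "b \<in> common_kernel E B ?J \<longleftrightarrow> b \<in> carrier B \<and> (\<forall>j\<in>S. b \<in> common_kernel E B (?X j))"
    for b
  proof
    assume b: "b \<in> common_kernel E B ?J"
    have "common_kernel E B ?J \<subseteq> common_kernel E B (?X j)" if "j \<in> S" for j
      by (rule common_kernel_antimono[OF join_op_upper[of j S ps, OF that ps[OF that]]])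
    with b show "b \<in> carrier B \<and> (\<forall>j\<in>S. b \<in> common_kernel E B (?X j))"
      by (auto simp: common_kernel_def)
  next
    assume b: "b \<in> carrier B \<and> (\<forall>j\<in>S. b \<in> common_kernel E B (?X j))"
    have "submodule (common_kernel E ?D {eta R E B b}) R ?D"
      by (rule submodule_common_kernel[OF dual_module[OF B]])
        (use b eta_in_bidual[OF B] dual_carrier_lin_map in blast)
    moreover have "?X j \<subseteq> common_kernel E ?D {eta R E B b}" if "j \<in> S" for j
      using b that ps[OF that] by (auto simp: common_kernel_def eta_apply)
    ultimately have "?J \<subseteq> common_kernel E ?D {eta R E B b}"
      by (rule join_op_least)
    then show "b \<in> common_kernel E B ?J"
      using b join_op_carrier by (auto simp: common_kernel_def eta_apply)
  qed
  moreover have "smile_dual R E (ps j) (A, B) = common_kernel E B (?X j)" if "j \<in> S" for j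
    by (rule smile_dual_eq[of B "ps j", OF B ps[OF that]])
  ultimately show ?thesis
    using smile_dual_eq[of B "join_op R S ps", OF B join_op_carrier]
    by (auto simp: meet_op_def)
qed

end

section \<open>Graphs of partial linear maps\<close>

text \<open>Partial linear maps \<open>M \<rightharpoonup> E\<close> are handled through their graphs, so that a chain of
  extensions is joined by taking the union.\<close>
definition linear_graph ::
  "('r,'x) ring_scheme \<Rightarrow> ('r,'e) module \<Rightarrow> ('r,'a) module \<Rightarrow> ('a \<times> 'e) set \<Rightarrow> bool" where
  "linear_graph R E M G \<longleftrightarrow> G \<subseteq> carrier M \<times> carrier E \<and> (\<zero>\<^bsub>M\<^esub>, \<zero>\<^bsub>E\<^esub>) \<in> G
     \<and> (\<forall>a u b v. (a, u) \<in> G \<longrightarrow> (b, v) \<in> G \<longrightarrow> (a \<oplus>\<^bsub>M\<^esub> b, u \<oplus>\<^bsub>E\<^esub> v) \<in> G)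
     \<and> (\<forall>r a u. r \<in> carrier R \<longrightarrow> (a, u) \<in> G \<longrightarrow> (r \<odot>\<^bsub>M\<^esub> a, r \<odot>\<^bsub>E\<^esub> u) \<in> G)
     \<and> (\<forall>u. (\<zero>\<^bsub>M\<^esub>, u) \<in> G \<longrightarrow> u = \<zero>\<^bsub>E\<^esub>)"

lemma linear_graphD:
  assumes "linear_graph R E M G"
  shows "(a, u) \<in> G \<Longrightarrow> a \<in> carrier M \<and> u \<in> carrier E"
    and "(\<zero>\<^bsub>M\<^esub>, \<zero>\<^bsub>E\<^esub>) \<in> G"
    and "(a, u) \<in> G \<Longrightarrow> (b, v) \<in> G \<Longrightarrow> (a \<oplus>\<^bsub>M\<^esub> b, u \<oplus>\<^bsub>E\<^esub> v) \<in> G"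
    and "r \<in> carrier R \<Longrightarrow> (a, u) \<in> G \<Longrightarrow> (r \<odot>\<^bsub>M\<^esub> a, r \<odot>\<^bsub>E\<^esub> u) \<in> G"
    and "(\<zero>\<^bsub>M\<^esub>, u) \<in> G \<Longrightarrow> u = \<zero>\<^bsub>E\<^esub>"
  using assms unfolding linear_graph_def by blast+

definition graph_adjoin ::
  "('r,'x) ring_scheme \<Rightarrow> ('r,'e) module \<Rightarrow> ('r,'a) module \<Rightarrow> ('a \<times> 'e) set \<Rightarrow> 'a \<Rightarrow> 'e
    \<Rightarrow> ('a \<times> 'e) set" where
  "graph_adjoin R E M G y e =
     {(a \<oplus>\<^bsub>M\<^esub> r \<odot>\<^bsub>M\<^esub> y, u \<oplus>\<^bsub>E\<^esub> r \<odot>\<^bsub>E\<^esub> e) | a u r. (a, u) \<in> G \<and> r \<in> carrier R}"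

lemma graph_adjoinI:
  "(a, u) \<in> G \<Longrightarrow> r \<in> carrier R
    \<Longrightarrow> (a \<oplus>\<^bsub>M\<^esub> r \<odot>\<^bsub>M\<^esub> y, u \<oplus>\<^bsub>E\<^esub> r \<odot>\<^bsub>E\<^esub> e) \<in> graph_adjoin R E M G y e"
  unfolding graph_adjoin_def by blast

lemma graph_adjoinE:
  assumes "(b, v) \<in> graph_adjoin R E M G y e" and "linear_graph R E M G"
  obtains a u r where "b = a \<oplus>\<^bsub>M\<^esub> r \<odot>\<^bsub>M\<^esub> y" "v = u \<oplus>\<^bsub>E\<^esub> r \<odot>\<^bsub>E\<^esub> e" "(a, u) \<in> G"
    "r \<in> carrier R" "a \<in> carrier M" "u \<in> carrier E"
proof -
  from assms(1) obtain a u r where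
    "b = a \<oplus>\<^bsub>M\<^esub> r \<odot>\<^bsub>M\<^esub> y" "v = u \<oplus>\<^bsub>E\<^esub> r \<odot>\<^bsub>E\<^esub> e" "(a, u) \<in> G" "r \<in> carrier R"
    unfolding graph_adjoin_def by blast
  with linear_graphD(1)[OF assms(2)] that show thesis by blast
qed

context matlis_dual
begin

lemma linear_graph_neg:
  assumes "module R M" "linear_graph R E M G" "(a, u) \<in> G"
  shows "(\<ominus>\<^bsub>M\<^esub> a, \<ominus>\<^bsub>E\<^esub> u) \<in> G"
proof -
  interpret M: module R M by fact
  have "a \<in> carrier M" "u \<in> carrier E" using linear_graphD(1)[OF assms(2,3)] by auto
  with linear_graphD(4)[OF assms(2) _ assms(3), of "\<ominus>\<^bsub>R\<^esub> \<one>\<^bsub>R\<^esub>"] show ?thesis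
    by (simp add: M.smult_l_minus E.smult_l_minus)
qed

lemma linear_graph_single_valued:
  assumes M: "module R M" and G: "linear_graph R E M G" and "(a, u) \<in> G" "(a, v) \<in> G"
  shows "u = v"
proof -
  interpret M: module R M by fact
  have carrier: "a \<in> carrier M" "u \<in> carrier E" "v \<in> carrier E"
    using linear_graphD(1)[OF G] assms(3,4) by auto
  have "(a \<oplus>\<^bsub>M\<^esub> \<ominus>\<^bsub>M\<^esub> a, u \<oplus>\<^bsub>E\<^esub> \<ominus>\<^bsub>E\<^esub> v) \<in> G"
    using linear_graphD(3)[OF G assms(3) linear_graph_neg[OF M G assms(4)]] .
  then have "u \<oplus>\<^bsub>E\<^esub> \<ominus>\<^bsub>E\<^esub> v = \<zero>\<^bsub>E\<^esub>"
    using linear_graphD(5)[OF G] carrier by (simp add: M.r_neg)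
  then show "u = v"
    using E.minus_equality[of u "\<ominus>\<^bsub>E\<^esub> v"] carrier by (simp add: E.minus_minus)
qed

lemma graph_adjoin_superset:
  assumes M: "module R M" and G: "linear_graph R E M G"
    and y: "y \<in> carrier M" and e: "e \<in> carrier E"
  shows "G \<subseteq> graph_adjoin R E M G y e" and "(y, e) \<in> graph_adjoin R E M G y e"
proof -
  interpret M: module R M by fact
  note GD = linear_graphD[OF G]
  show "G \<subseteq> graph_adjoin R E M G y e"
  proof (rule subrelI)
    fix a u assume "(a, u) \<in> G"
    then show "(a, u) \<in> graph_adjoin R E M G y e"
      using graph_adjoinI[where R = R and M = M and E = E and y = y and e = e, of a u G "\<zero>\<^bsub>R\<^esub>"] GD(1) y e by simp
  qed
  show "(y, e) \<in> graph_adjoin R E M G y e"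
    using graph_adjoinI[where R = R and M = M and E = E and y = y and e = e, OF GD(2), of "\<one>\<^bsub>R\<^esub>"] y e by simp
qed

lemma graph_adjoin_zero:
  assumes M: "module R M" and G: "linear_graph R E M G"
    and y: "y \<in> carrier M" and e: "e \<in> carrier E"
    and consistent: "\<And>r u. r \<in> carrier R \<Longrightarrow> (r \<odot>\<^bsub>M\<^esub> y, u) \<in> G \<Longrightarrow> u = r \<odot>\<^bsub>E\<^esub> e"
    and zero: "(\<zero>\<^bsub>M\<^esub>, v) \<in> graph_adjoin R E M G y e"
  shows "v = \<zero>\<^bsub>E\<^esub>"
proof -
  interpret M: module R M by fact
  obtain a u r where a: "\<zero>\<^bsub>M\<^esub> = a \<oplus>\<^bsub>M\<^esub> r \<odot>\<^bsub>M\<^esub> y" "v = u \<oplus>\<^bsub>E\<^esub> r \<odot>\<^bsub>E\<^esub> e" "(a, u) \<in> G"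
    "r \<in> carrier R" "a \<in> carrier M" "u \<in> carrier E"
    using zero G by (rule graph_adjoinE)
  have "a = (\<ominus>\<^bsub>R\<^esub> r) \<odot>\<^bsub>M\<^esub> y"
    using M.minus_equality[of a "r \<odot>\<^bsub>M\<^esub> y"] a(1,4,5) y by (simp add: M.smult_l_minus)
  then have "u = (\<ominus>\<^bsub>R\<^esub> r) \<odot>\<^bsub>E\<^esub> e"
    using consistent a(3,4) by simp
  then show "v = \<zero>\<^bsub>E\<^esub>"
    using a(2,4) e by (simp add: E.smult_l_minus E.l_neg)
qed

lemma linear_graph_adjoin:
  assumes M: "module R M" and G: "linear_graph R E M G"
    and y: "y \<in> carrier M" and e: "e \<in> carrier E"
    and consistent: "\<And>r u. r \<in> carrier R \<Longrightarrow> (r \<odot>\<^bsub>M\<^esub> y, u) \<in> G \<Longrightarrow> u = r \<odot>\<^bsub>E\<^esub> e"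
  shows "linear_graph R E M (graph_adjoin R E M G y e)"
  unfolding linear_graph_def
proof (intro conjI allI impI)
  interpret M: module R M by fact
  note GD = linear_graphD[OF G]
  let ?G' = "graph_adjoin R E M G y e"
  show "?G' \<subseteq> carrier M \<times> carrier E"
  proof (rule subrelI)
    fix a u assume "(a, u) \<in> ?G'"
    then obtain a1 u1 r where "a = a1 \<oplus>\<^bsub>M\<^esub> r \<odot>\<^bsub>M\<^esub> y" "u = u1 \<oplus>\<^bsub>E\<^esub> r \<odot>\<^bsub>E\<^esub> e"
      "r \<in> carrier R" "a1 \<in> carrier M" "u1 \<in> carrier E"
      using G by (rule graph_adjoinE)
    with y e show "(a, u) \<in> carrier M \<times> carrier E" by simp
  qed
  show "(\<zero>\<^bsub>M\<^esub>, \<zero>\<^bsub>E\<^esub>) \<in> ?G'"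
    using graph_adjoin_superset(1)[OF M G y e] GD(2) by blast
  show "v = \<zero>\<^bsub>E\<^esub>" if "(\<zero>\<^bsub>M\<^esub>, v) \<in> ?G'" for v
    by (rule graph_adjoin_zero[OF M G y e consistent that])
next
  interpret M: module R M by fact
  note GD = linear_graphD[OF G]
  fix a u b v assume au: "(a, u) \<in> graph_adjoin R E M G y e" and bv: "(b, v) \<in> graph_adjoin R E M G y e"
  obtain a1 u1 r where a: "a = a1 \<oplus>\<^bsub>M\<^esub> r \<odot>\<^bsub>M\<^esub> y" "u = u1 \<oplus>\<^bsub>E\<^esub> r \<odot>\<^bsub>E\<^esub> e" "(a1, u1) \<in> G"
    "r \<in> carrier R" "a1 \<in> carrier M" "u1 \<in> carrier E"
    using au G by (rule graph_adjoinE)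
  obtain b1 v1 s where b: "b = b1 \<oplus>\<^bsub>M\<^esub> s \<odot>\<^bsub>M\<^esub> y" "v = v1 \<oplus>\<^bsub>E\<^esub> s \<odot>\<^bsub>E\<^esub> e" "(b1, v1) \<in> G"
    "s \<in> carrier R" "b1 \<in> carrier M" "v1 \<in> carrier E"
    using bv G by (rule graph_adjoinE)
  have "a \<oplus>\<^bsub>M\<^esub> b = (a1 \<oplus>\<^bsub>M\<^esub> b1) \<oplus>\<^bsub>M\<^esub> (r \<oplus>\<^bsub>R\<^esub> s) \<odot>\<^bsub>M\<^esub> y"
    using a b y by (simp add: M.smult_l_distr M.a_ac)
  moreover have "u \<oplus>\<^bsub>E\<^esub> v = (u1 \<oplus>\<^bsub>E\<^esub> v1) \<oplus>\<^bsub>E\<^esub> (r \<oplus>\<^bsub>R\<^esub> s) \<odot>\<^bsub>E\<^esub> e"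
    using a b e by (simp add: E.smult_l_distr E.a_ac)
  ultimately show "(a \<oplus>\<^bsub>M\<^esub> b, u \<oplus>\<^bsub>E\<^esub> v) \<in> graph_adjoin R E M G y e"
    using graph_adjoinI[where R = R and M = M and E = E and y = y and e = e, OF GD(3)[OF a(3) b(3)] R.a_closed[OF a(4) b(4)]] by simp
next
  interpret M: module R M by fact
  note GD = linear_graphD[OF G]
  fix t a u assume t: "t \<in> carrier R" and au: "(a, u) \<in> graph_adjoin R E M G y e"
  obtain a1 u1 r where a: "a = a1 \<oplus>\<^bsub>M\<^esub> r \<odot>\<^bsub>M\<^esub> y" "u = u1 \<oplus>\<^bsub>E\<^esub> r \<odot>\<^bsub>E\<^esub> e" "(a1, u1) \<in> G"
    "r \<in> carrier R" "a1 \<in> carrier M" "u1 \<in> carrier E"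
    using au G by (rule graph_adjoinE)
  have "t \<odot>\<^bsub>M\<^esub> a = t \<odot>\<^bsub>M\<^esub> a1 \<oplus>\<^bsub>M\<^esub> (t \<otimes>\<^bsub>R\<^esub> r) \<odot>\<^bsub>M\<^esub> y"
    using a y t by (simp add: M.smult_r_distr M.smult_assoc1)
  moreover have "t \<odot>\<^bsub>E\<^esub> u = t \<odot>\<^bsub>E\<^esub> u1 \<oplus>\<^bsub>E\<^esub> (t \<otimes>\<^bsub>R\<^esub> r) \<odot>\<^bsub>E\<^esub> e"
    using a e t by (simp add: E.smult_r_distr E.smult_assoc1)
  ultimately show "(t \<odot>\<^bsub>M\<^esub> a, t \<odot>\<^bsub>E\<^esub> u) \<in> graph_adjoin R E M G y e"
    using graph_adjoinI[where R = R and M = M and E = E and y = y and e = e, OF GD(4)[OF t a(3)] R.m_closed[OF t a(4)]] by simp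
qed

lemma linear_graph_Union:
  assumes "C \<noteq> {}" and C: "subset.chain {G. linear_graph R E M G} C"
  shows "linear_graph R E M (\<Union>C)"
proof -
  have lin: "linear_graph R E M G" if "G \<in> C" for G
    using C that unfolding pred_on.chain_def by blast
  have common: "\<exists>G\<in>C. p \<in> G \<and> q \<in> G" if pq: "p \<in> \<Union>C" "q \<in> \<Union>C" for p q
  proof -
    obtain G H where "G \<in> C" "H \<in> C" "p \<in> G" "q \<in> H" using pq by blast
    moreover have "G \<subseteq> H \<or> H \<subseteq> G"
      using C \<open>G \<in> C\<close> \<open>H \<in> C\<close> unfolding pred_on.chain_def by blast
    ultimately show ?thesis by blast
  qed
  obtain G0 where "G0 \<in> C" using assms(1) by blast
  show ?thesis
    unfolding linear_graph_def
  proof (intro conjI allI impI)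
    show "\<Union>C \<subseteq> carrier M \<times> carrier E"
    proof (rule subrelI)
      fix a u assume "(a, u) \<in> \<Union>C"
      then show "(a, u) \<in> carrier M \<times> carrier E"
        using linear_graphD(1)[OF lin] by blast
    qed
    show "(\<zero>\<^bsub>M\<^esub>, \<zero>\<^bsub>E\<^esub>) \<in> \<Union>C"
      using linear_graphD(2)[OF lin] \<open>G0 \<in> C\<close> by blast
  next
    fix a u b v assume "(a, u) \<in> \<Union>C" "(b, v) \<in> \<Union>C"
    then obtain G where "G \<in> C" "(a, u) \<in> G" "(b, v) \<in> G" using common by blast
    then show "(a \<oplus>\<^bsub>M\<^esub> b, u \<oplus>\<^bsub>E\<^esub> v) \<in> \<Union>C"
      using linear_graphD(3)[OF lin] by blast
  next
    fix r a u assume "r \<in> carrier R" "(a, u) \<in> \<Union>C"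
    then show "(r \<odot>\<^bsub>M\<^esub> a, r \<odot>\<^bsub>E\<^esub> u) \<in> \<Union>C"
      using linear_graphD(4)[OF lin] by blast
  next
    fix u assume "(\<zero>\<^bsub>M\<^esub>, u) \<in> \<Union>C"
    then show "u = \<zero>\<^bsub>E\<^esub>"
      using linear_graphD(5)[OF lin] by blast
  qed
qed

lemma Domain_linear_graph_submodule:
  assumes M: "module R M" and G: "linear_graph R E M G"
  shows "submodule (Domain G) R M"
proof -
  interpret M: module R M by fact
  note GD = linear_graphD[OF G]
  show ?thesis
  proof (rule M.submoduleI)
    show "Domain G \<subseteq> carrier M" using GD(1) by blast
    show "\<zero>\<^bsub>M\<^esub> \<in> Domain G" using GD(2) by blast
    show "\<ominus>\<^bsub>M\<^esub> a \<in> Domain G" if "a \<in> Domain G" for a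
      using that linear_graph_neg[OF M G] by blast
    show "a \<oplus>\<^bsub>M\<^esub> b \<in> Domain G" if "a \<in> Domain G" "b \<in> Domain G" for a b
      using that GD(3) by blast
    show "r \<odot>\<^bsub>M\<^esub> a \<in> Domain G" if "r \<in> carrier R" "a \<in> Domain G" for r a
      using that GD(4) by blast
  qed
qed

lemma linear_graph_total_dual:
  assumes M: "module R M" and G: "linear_graph R E M G" and total: "Domain G = carrier M"
  obtains \<phi> where "\<phi> \<in> carrier (dual R E M)" and "\<And>x u. (x, u) \<in> G \<Longrightarrow> \<phi> x = u"
proof
  note GD = linear_graphD[OF G]
  define \<phi> where "\<phi> = (\<lambda>x\<in>carrier M. THE u. (x, u) \<in> G)"
  show graph: "\<phi> x = u" if "(x, u) \<in> G" for x u
  proof -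
    have "(THE u. (x, u) \<in> G) = u"
      using that linear_graph_single_valued[OF M G that] by blast
    with that GD(1) show ?thesis by (simp add: \<phi>_def)
  qed
  have in_graph: "(x, \<phi> x) \<in> G" if "x \<in> carrier M" for x
    using that total graph by blast
  show "\<phi> \<in> carrier (dual R E M)"
    unfolding dual_carrier_iff lin_map_def
  proof (intro conjI ballI)
    show "\<phi> \<in> carrier M \<rightarrow> carrier E" using in_graph GD(1) by blast
    show "\<phi> \<in> extensional (carrier M)" by (simp add: \<phi>_def)
    show "\<phi> (x \<oplus>\<^bsub>M\<^esub> y) = \<phi> x \<oplus>\<^bsub>E\<^esub> \<phi> y" if "x \<in> carrier M" "y \<in> carrier M" for x y
      using graph GD(3) in_graph that by blast
    show "\<phi> (r \<odot>\<^bsub>M\<^esub> x) = r \<odot>\<^bsub>E\<^esub> \<phi> x" if "r \<in> carrier R" "x \<in> carrier M" for r x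
      using graph GD(4) in_graph that by blast
  qed
qed

end

section \<open>Injective cogenerators\<close>

locale injective_cogenerator = matlis_dual +
  fixes x0
  assumes baer: "baer_injective R E"
    and x0_carrier: "x0 \<in> carrier E" and x0_nonzero: "x0 \<noteq> \<zero>\<^bsub>E\<^esub>"
    and maximalideal_kills_x0: "maximalideal m R \<Longrightarrow> a \<in> m \<Longrightarrow> a \<odot>\<^bsub>E\<^esub> x0 = \<zero>\<^bsub>E\<^esub>"
begin

lemma linear_graph_baer_extend:
  assumes M: "module R M" and G: "linear_graph R E M G" and y: "y \<in> carrier M"
  shows "\<exists>G'. linear_graph R E M G' \<and> G \<subseteq> G' \<and> y \<in> Domain G'"
proof -
  interpret M: module R M by fact
  note GD = linear_graphD[OF G]
  let ?I = "{r \<in> carrier R. r \<odot>\<^bsub>M\<^esub> y \<in> Domain G}"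
  have I: "ideal ?I R"
    by (rule M.colon_ideal[OF Domain_linear_graph_submodule[OF M G] y])
  define h where "h r = (THE u. (r \<odot>\<^bsub>M\<^esub> y, u) \<in> G)" for r
  have h_eq: "h r = u" if ru: "(r \<odot>\<^bsub>M\<^esub> y, u) \<in> G" for r u
    unfolding h_def using linear_graph_single_valued[OF M G ru] ru by blast
  have h_graph: "(r \<odot>\<^bsub>M\<^esub> y, h r) \<in> G" if "r \<in> ?I" for r
    using that h_eq by blast
  have "\<exists>e\<in>carrier E. \<forall>a\<in>?I. h a = a \<odot>\<^bsub>E\<^esub> e"
  proof (rule baer[unfolded baer_injective_def, rule_format], intro conjI)
    show "ideal ?I R" by (rule I)
    show "h \<in> ?I \<rightarrow> carrier E"
      using h_graph GD(1) by blast
    show "\<forall>a\<in>?I. \<forall>b\<in>?I. h (a \<oplus>\<^bsub>R\<^esub> b) = h a \<oplus>\<^bsub>E\<^esub> h b"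
    proof (intro ballI)
      fix a b assume a: "a \<in> ?I" and b: "b \<in> ?I"
      have "((a \<oplus>\<^bsub>R\<^esub> b) \<odot>\<^bsub>M\<^esub> y, h a \<oplus>\<^bsub>E\<^esub> h b) \<in> G"
        using GD(3)[OF h_graph[OF a] h_graph[OF b]] a b y by (simp add: M.smult_l_distr)
      then show "h (a \<oplus>\<^bsub>R\<^esub> b) = h a \<oplus>\<^bsub>E\<^esub> h b" by (rule h_eq)
    qed
    show "\<forall>r\<in>carrier R. \<forall>a\<in>?I. h (r \<otimes>\<^bsub>R\<^esub> a) = r \<odot>\<^bsub>E\<^esub> h a"
    proof (intro ballI)
      fix r a assume r: "r \<in> carrier R" and a: "a \<in> ?I"
      have "((r \<otimes>\<^bsub>R\<^esub> a) \<odot>\<^bsub>M\<^esub> y, r \<odot>\<^bsub>E\<^esub> h a) \<in> G"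
        using GD(4)[OF r h_graph[OF a]] r a y by (simp add: M.smult_assoc1)
      then show "h (r \<otimes>\<^bsub>R\<^esub> a) = r \<odot>\<^bsub>E\<^esub> h a" by (rule h_eq)
    qed
  qed
  then obtain e where e: "e \<in> carrier E" and h_e: "\<And>a. a \<in> ?I \<Longrightarrow> h a = a \<odot>\<^bsub>E\<^esub> e"
    by blast
  have "u = r \<odot>\<^bsub>E\<^esub> e" if r: "r \<in> carrier R" and ru: "(r \<odot>\<^bsub>M\<^esub> y, u) \<in> G" for r u
    using h_eq[OF ru] h_e[of r] r ru by blast
  then have "linear_graph R E M (graph_adjoin R E M G y e)"
    by (rule linear_graph_adjoin[OF M G y e])
  with graph_adjoin_superset[OF M G y e] show ?thesis by blast
qed

lemma linear_graph_total_extension: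
  assumes M: "module R M" and G0: "linear_graph R E M G0"
  obtains G where "linear_graph R E M G" "G0 \<subseteq> G" "Domain G = carrier M"
proof -
  let ?A = "{G. linear_graph R E M G \<and> G0 \<subseteq> G}"
  have "\<exists>G\<in>?A. \<forall>G'\<in>?A. G \<subseteq> G' \<longrightarrow> G' = G"
  proof (rule subset_Zorn_nonempty)
    show "?A \<noteq> {}" using G0 by blast
    fix C assume "C \<noteq> {}" and C: "subset.chain ?A C"
    have "subset.chain {G. linear_graph R E M G} C"
      using C unfolding pred_on.chain_def by blast
    with \<open>C \<noteq> {}\<close> have "linear_graph R E M (\<Union>C)"
      by (rule linear_graph_Union)
    moreover obtain G where "G \<in> C" using \<open>C \<noteq> {}\<close> by blast
    then have "G0 \<subseteq> \<Union>C" using C unfolding pred_on.chain_def by blast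
    ultimately show "\<Union>C \<in> ?A" by blast
  qed
  then obtain G where G: "linear_graph R E M G" "G0 \<subseteq> G"
    and maximal: "\<forall>G'\<in>?A. G \<subseteq> G' \<longrightarrow> G' = G"
    by blast
  have "Domain G = carrier M"
  proof
    show "Domain G \<subseteq> carrier M" using linear_graphD(1)[OF G(1)] by blast
    show "carrier M \<subseteq> Domain G"
    proof
      fix y assume "y \<in> carrier M"
      then obtain G' where "linear_graph R E M G'" "G \<subseteq> G'" "y \<in> Domain G'"
        using linear_graph_baer_extend[OF M G(1)] by blast
      with G(2) maximal show "y \<in> Domain G" by blast
    qed
  qed
  with G that show thesis by blast
qed

lemma separating_functional:
  assumes M: "module R M" and N: "submodule N R M" and m: "m \<in> carrier M" "m \<notin> N"
  obtains \<phi> where "\<phi> \<in> carrier (dual R E M)" "\<And>n. n \<in> N \<Longrightarrow> \<phi> n = \<zero>\<^bsub>E\<^esub>" "\<phi> m \<noteq> \<zero>\<^bsub>E\<^esub>"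
proof -
  interpret M: module R M by fact
  note NE = M.submoduleE[OF N]
  define G0 where "G0 = (\<lambda>n. (n, \<zero>\<^bsub>E\<^esub>)) ` N"
  have G0: "linear_graph R E M G0"
    using NE M.submodule_zero_closed[OF N] unfolding linear_graph_def G0_def by auto
  \<comment> \<open>\<open>m \<mapsto> x\<^sub>0\<close> is consistent with \<open>N \<mapsto> 0\<close>: the ideal \<open>(N : m)\<close> is proper, hence lies in a
    maximal ideal, and maximal ideals kill \<open>x\<^sub>0\<close>\<close>
  have "u = r \<odot>\<^bsub>E\<^esub> x0" if r: "r \<in> carrier R" and ru: "(r \<odot>\<^bsub>M\<^esub> m, u) \<in> G0" for r u
  proof -
    have u: "u = \<zero>\<^bsub>E\<^esub>" and rm: "r \<odot>\<^bsub>M\<^esub> m \<in> N" using ru unfolding G0_def by auto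
    have "ideal {r \<in> carrier R. r \<odot>\<^bsub>M\<^esub> m \<in> N} R" by (rule M.colon_ideal[OF N m(1)])
    moreover have "\<one>\<^bsub>R\<^esub> \<notin> {r \<in> carrier R. r \<odot>\<^bsub>M\<^esub> m \<in> N}" using m by simp
    ultimately obtain mm where "maximalideal mm R" "{r \<in> carrier R. r \<odot>\<^bsub>M\<^esub> m \<in> N} \<subseteq> mm"
      using R.ideal_le_maximalideal by blast
    with r rm have "r \<odot>\<^bsub>E\<^esub> x0 = \<zero>\<^bsub>E\<^esub>" by (blast intro: maximalideal_kills_x0)
    with u show ?thesis by simp
  qed
  then have "linear_graph R E M (graph_adjoin R E M G0 m x0)"
    by (rule linear_graph_adjoin[OF M G0 m(1) x0_carrier])
  with graph_adjoin_superset[OF M G0 m(1) x0_carrier]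
  obtain G1 where G1: "linear_graph R E M G1" "G0 \<subseteq> G1" "(m, x0) \<in> G1"
    by blast
  obtain G where G: "linear_graph R E M G" "G1 \<subseteq> G" "Domain G = carrier M"
    using linear_graph_total_extension[OF M G1(1)] by blast
  obtain \<phi> where \<phi>: "\<phi> \<in> carrier (dual R E M)" "\<And>x u. (x, u) \<in> G \<Longrightarrow> \<phi> x = u"
    using linear_graph_total_dual[OF M G(1,3)] by blast
  show thesis
  proof (rule that[OF \<phi>(1)])
    show "\<phi> n = \<zero>\<^bsub>E\<^esub>" if "n \<in> N" for n
      using that G1(2) G(2) \<phi>(2) unfolding G0_def by blast
    show "\<phi> m \<noteq> \<zero>\<^bsub>E\<^esub>"
      using G1(3) G(2) \<phi>(2) x0_nonzero by blast
  qed
qed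

lemma common_kernel_ann_dual:
  assumes M: "module R M" and N: "submodule N R M"
  shows "common_kernel E M (ann_dual R E M N) = N"
proof
  show "N \<subseteq> common_kernel E M (ann_dual R E M N)"
    using module.submoduleE(1)[OF M N] by (auto simp: common_kernel_def ann_dual_def)
  show "common_kernel E M (ann_dual R E M N) \<subseteq> N"
  proof
    fix x assume x: "x \<in> common_kernel E M (ann_dual R E M N)"
    show "x \<in> N"
    proof (rule ccontr)
      assume "x \<notin> N"
      have "x \<in> carrier M" using x by (simp add: common_kernel_def)
      from this \<open>x \<notin> N\<close> show False
      proof (rule separating_functional[OF M N])
        fix \<phi> assume \<phi>: "\<phi> \<in> carrier (dual R E M)" "\<And>n. n \<in> N \<Longrightarrow> \<phi> n = \<zero>\<^bsub>E\<^esub>"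
          "\<phi> x \<noteq> \<zero>\<^bsub>E\<^esub>"
        then have "\<phi> \<in> ann_dual R E M N" by (simp add: ann_dual_def)
        with x \<phi>(3) show False unfolding common_kernel_def by blast
      qed
    qed
  qed
qed

text \<open>If \<open>\<eta>\<close> is onto for \<open>B\<^sup>\<or>\<close>, then also for \<open>B\<close>: a functional on \<open>B\<^sup>\<or>\<^sup>\<or>\<close> killing
  \<open>\<eta>\<^sub>B(B)\<close> is evaluation at some \<open>f \<in> B\<^sup>\<or>\<close> with \<open>f(B) = 0\<close>, hence zero, and \<open>\<eta>\<^sub>B(B)\<close> is
  the common kernel of all such functionals.\<close>
lemma eta_surjective:
  assumes B: "module R B"
    and surj: "eta R E (dual R E B) ` carrier (dual R E B) = carrier (dual R E (dual R E (dual R E B)))"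
  shows "eta R E B ` carrier B = carrier (dual R E (dual R E B))"
proof
  let ?D = "dual R E B"
  let ?DD = "dual R E ?D"
  have D: "module R ?D" and DD: "module R ?DD"
    using dual_module[OF B] dual_module[OF dual_module[OF B]] .
  interpret D: module R ?D by (rule D)
  show "eta R E B ` carrier B \<subseteq> carrier ?DD"
    using eta_in_bidual[OF B] by blast
  have image: "submodule (eta R E B ` carrier B) R ?DD"
    by (rule lin_map_image_submodule[OF B DD eta_lin_map[OF B]])
  have "\<Psi> \<Phi> = \<zero>\<^bsub>E\<^esub>"
    if \<Phi>: "\<Phi> \<in> carrier ?DD" and \<Psi>: "\<Psi> \<in> ann_dual R E ?DD (eta R E B ` carrier B)" for \<Phi> \<Psi>
  proof -
    have "\<Psi> \<in> eta R E ?D ` carrier ?D"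
      using \<Psi> surj by (simp add: ann_dual_def)
    then obtain f where f: "\<Psi> = eta R E ?D f" "f \<in> carrier ?D" by (rule imageE)
    have \<Psi>_vanishes: "\<forall>x\<in>eta R E B ` carrier B. \<Psi> x = \<zero>\<^bsub>E\<^esub>"
      using \<Psi> by (simp add: ann_dual_def)
    have "f b = \<zero>\<^bsub>E\<^esub>" if b: "b \<in> carrier B" for b
    proof -
      have "f b = \<Psi> (eta R E B b)"
        using b f eta_in_bidual[OF B b] by (simp add: eta_apply)
      also have "\<dots> = \<zero>\<^bsub>E\<^esub>"
        using \<Psi>_vanishes b by blast
      finally show ?thesis .
    qed
    then have "f = \<zero>\<^bsub>?D\<^esub>"
      by (intro dual_eqI[OF f(2) D.zero_closed]) (simp add: dual_zero)
    then have "\<Psi> \<Phi> = \<Phi> \<zero>\<^bsub>?D\<^esub>"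
      using f \<Phi> by (simp add: eta_apply)
    also have "\<dots> = \<zero>\<^bsub>E\<^esub>"
      using lin_map_zero[OF D E.module_axioms dual_carrier_lin_map[OF \<Phi>]] .
    finally show ?thesis .
  qed
  then have "carrier ?DD \<subseteq> common_kernel E ?DD (ann_dual R E ?DD (eta R E B ` carrier B))"
    unfolding common_kernel_def by blast
  then show "carrier ?DD \<subseteq> eta R E B ` carrier B"
    using common_kernel_ann_dual[OF DD image] by simp
qed

lemma ann_dual_common_kernel:
  assumes B: "module R B" and surj: "eta R E B ` carrier B = carrier (dual R E (dual R E B))"
    and U: "submodule U R (dual R E B)"
  shows "ann_dual R E B (common_kernel E B U) = U"
proof
  let ?D = "dual R E B"
  have D: "module R ?D" by (rule dual_module[OF B])
  show "U \<subseteq> ann_dual R E B (common_kernel E B U)"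
    using module.submoduleE(1)[OF D U] by (auto simp: common_kernel_def ann_dual_def)
  show "ann_dual R E B (common_kernel E B U) \<subseteq> U"
  proof
    fix \<phi> assume \<phi>: "\<phi> \<in> ann_dual R E B (common_kernel E B U)"
    have "\<Phi> \<phi> = \<zero>\<^bsub>E\<^esub>" if \<Phi>: "\<Phi> \<in> ann_dual R E ?D U" for \<Phi>
    proof -
      have "\<Phi> \<in> eta R E B ` carrier B"
        using \<Phi> surj by (simp add: ann_dual_def)
      then obtain c where c: "\<Phi> = eta R E B c" "c \<in> carrier B" by (rule imageE)
      have "g c = \<zero>\<^bsub>E\<^esub>" if g: "g \<in> U" for g
      proof -
        have "g \<in> carrier ?D" using g module.submoduleE(1)[OF D U] by blast
        with c have "g c = \<Phi> g" by (simp add: eta_apply)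
        also have "\<dots> = \<zero>\<^bsub>E\<^esub>" using \<Phi> g unfolding ann_dual_def by blast
        finally show ?thesis .
      qed
      with c(2) have "c \<in> common_kernel E B U" by (simp add: common_kernel_def)
      moreover have "\<phi> \<in> carrier ?D" "\<forall>x\<in>common_kernel E B U. \<phi> x = \<zero>\<^bsub>E\<^esub>"
        using \<phi> by (simp_all add: ann_dual_def)
      ultimately show ?thesis
        using c by (simp add: eta_apply)
    qed
    moreover have "\<phi> \<in> carrier ?D" using \<phi> by (simp add: ann_dual_def)
    ultimately have "\<phi> \<in> common_kernel E ?D (ann_dual R E ?D U)"
      unfolding common_kernel_def by blast
    then show "\<phi> \<in> U"
      using common_kernel_ann_dual[OF D U] by simp
  qed
qed

lemma common_kernel_Inter_subset:
  assumes B: "module R B" and surj: "eta R E B ` carrier B = carrier (dual R E (dual R E B))"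
    and U: "\<And>j. j \<in> S \<Longrightarrow> submodule (U j) R (dual R E B)"
    and N: "submodule N R B" and U_N: "\<And>j. j \<in> S \<Longrightarrow> common_kernel E B (U j) \<subseteq> N"
  shows "common_kernel E B (carrier (dual R E B) \<inter> (\<Inter>j\<in>S. U j)) \<subseteq> N"
proof
  fix b assume b: "b \<in> common_kernel E B (carrier (dual R E B) \<inter> (\<Inter>j\<in>S. U j))"
  have "\<phi> \<in> carrier (dual R E B) \<inter> (\<Inter>j\<in>S. U j)" if \<phi>: "\<phi> \<in> ann_dual R E B N" for \<phi>
  proof -
    have "\<phi> \<in> U j" if "j \<in> S" for j
      using \<phi> ann_dual_antimono[OF U_N[OF that]] ann_dual_common_kernel[OF B surj U[OF that]]
      by blast
    moreover have "\<phi> \<in> carrier (dual R E B)" using \<phi> by (simp add: ann_dual_def)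
    ultimately show ?thesis by blast
  qed
  with b have "b \<in> common_kernel E B (ann_dual R E B N)"
    unfolding common_kernel_def by blast
  then show "b \<in> N" using common_kernel_ann_dual[OF B N] by simp
qed

lemma smile_dual_meet_op:
  assumes B: "module R B" and reflexive: "matlis_dualizable R E (dual R E B)"
    and ps: "\<And>j. j \<in> S \<Longrightarrow> submodule (ps j (ann_dual R E B A, dual R E B)) R (dual R E B)"
  shows "smile_dual R E (meet_op S ps) (A, B) = join_op R S (\<lambda>j. smile_dual R E (ps j)) (A, B)"
proof -
  let ?D = "dual R E B"
  let ?U = "\<lambda>j. ps j (ann_dual R E B A, ?D)"
  let ?V = "meet_op S ps (ann_dual R E B A, ?D)"
  have D: "module R ?D" by (rule dual_module[OF B])
  have surj: "eta R E B ` carrier B = carrier (dual R E ?D)"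
    using reflexive eta_surjective[OF B]
    unfolding matlis_dualizable_def mod_iso_def bij_betw_def by blast
  have V_carrier: "?V \<subseteq> carrier ?D" by (auto simp: meet_op_def)
  have smile_U: "smile_dual R E (ps j) (A, B) = common_kernel E B (?U j)" if "j \<in> S" for j
    by (rule smile_dual_eq[of B "ps j", OF B module.submoduleE(1)[OF D ps[OF that]]])
  have "common_kernel E B ?V = join_op R S (\<lambda>j. smile_dual R E (ps j)) (A, B)"
  proof
    have "submodule (common_kernel E B ?V) R B"
      using submodule_common_kernel[OF B] V_carrier dual_carrier_lin_map by blast
    moreover have "smile_dual R E (ps j) (A, B) \<subseteq> common_kernel E B ?V" if "j \<in> S" for j
      using smile_U[OF that] common_kernel_antimono[of ?V "?U j"] that by (auto simp: meet_op_def)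
    ultimately show "join_op R S (\<lambda>j. smile_dual R E (ps j)) (A, B) \<subseteq> common_kernel E B ?V"
      by (rule join_op_least)
  next
    show "common_kernel E B ?V \<subseteq> join_op R S (\<lambda>j. smile_dual R E (ps j)) (A, B)"
    proof
      fix b assume b: "b \<in> common_kernel E B ?V"
      show "b \<in> join_op R S (\<lambda>j. smile_dual R E (ps j)) (A, B)"
      proof (rule join_opI)
        show "b \<in> carrier B" using b by (simp add: common_kernel_def)
        fix N assume N: "submodule N R B"
          and smile_N: "\<And>j. j \<in> S \<Longrightarrow> smile_dual R E (ps j) (A, B) \<subseteq> N"
        have "common_kernel E B (carrier ?D \<inter> (\<Inter>j\<in>S. ?U j)) \<subseteq> N"
        proof (rule common_kernel_Inter_subset[OF B surj ps N])
          show "common_kernel E B (?U j) \<subseteq> N" if "j \<in> S" for j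
            using smile_N[OF that] smile_U[OF that] by simp
        qed
        with b show "b \<in> N" by (auto simp: meet_op_def)
      qed
    qed
  qed
  then show ?thesis using smile_dual_eq[of B "meet_op S ps", OF B V_carrier] by simp
qed

end

theorem proposition6p9:
  fixes R :: "('r,'x) ring_scheme" and E :: "('r,'e) module"
    and P :: "('r, 'a \<Rightarrow> 'e) pair set"
    and S :: "'i set" and ps :: "'i \<Rightarrow> ('r, 'a \<Rightarrow> 'e) pair \<Rightarrow> ('a \<Rightarrow> 'e) set"
  assumes "complete_noetherian_local R"
    and "injective_hull_residue R E"
    and "pair_class R E P"
    and "\<forall>j\<in>S. pair_operation R P (ps j)"
  shows "(\<forall>AB\<in>dual_class R E P.
           smile_dual R E (join_op R S ps) AB = meet_op S (\<lambda>j. smile_dual R E (ps j)) AB)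
       \<and> (\<forall>AB\<in>dual_class R E P.
           smile_dual R E (meet_op S ps) AB = join_op R S (\<lambda>j. smile_dual R E (ps j)) AB)"
proof -
  from assms(2) obtain x0 where E: "module R E" "baer_injective R E" "x0 \<in> carrier E"
    "x0 \<noteq> \<zero>\<^bsub>E\<^esub>" "\<forall>m. maximalideal m R \<longrightarrow> (\<forall>a\<in>m. a \<odot>\<^bsub>E\<^esub> x0 = \<zero>\<^bsub>E\<^esub>)"
    unfolding injective_hull_residue_def by blast
  interpret injective_cogenerator R E x0
    using E module.axioms(1)[OF E(1)]
    by (intro injective_cogenerator.intro matlis_dual.intro injective_cogenerator_axioms.intro) auto
  have "smile_dual R E (join_op R S ps) (A, B) = meet_op S (\<lambda>j. smile_dual R E (ps j)) (A, B)
      \<and> smile_dual R E (meet_op S ps) (A, B) = join_op R S (\<lambda>j. smile_dual R E (ps j)) (A, B)"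
    if "(A, B) \<in> dual_class R E P" for A B
  proof -
    let ?L = "ann_dual R E B A" and ?D = "dual R E B"
    from that have B: "module R B" and LD: "(?L, ?D) \<in> P"
      by (auto simp: dual_class_def)
    have ps: "submodule (ps j (?L, ?D)) R ?D" if "j \<in> S" for j
      using assms(4) that LD unfolding pair_operation_def by fast
    have "matlis_dualizable R E ?D"
      using assms(3) LD unfolding pair_class_def by fast
    with B ps module.submoduleE(1)[OF dual_module[OF B] ps] show ?thesis
      by (simp add: smile_dual_join_op smile_dual_meet_op)
  qed
  then show ?thesis by fast
qed

end
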